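(* If all the nodes in the graph are given different identities, then the identity of the leader node will be uniquely defined by the high level algorithm.
   Context: A broadcast network is modeled as a connected graph G(V,E) with n nodes, reliable FIFO message delivery with arbitrary finite delays, no failures. The high level (fragment-level) leader election algorithm: nodes are partitioned into fragments each with a candidate; id(F) = (size, candidate identity) ordered lexicographically (by size, then identity); external edges are directed from the larger-id fragment to the smaller-id one. Initially every node is a size-1 fragment in state wait. A fragment with some outgoing edge waits; a fragment whose external edges are all incoming enters work, counts its size new_size after a finite positive delay, and compares with its maximal neighbor F': if new_size > X · size(F') (X > 1) it updates its size, all its external edges become outgoing, and it returns to wait; otherwise it joins F'. A fragment with no external edges is the leader. It has been shown that, with distinct node identities, the sequence of events of this algorithm does not depend on the state delays (waitdelay, workdelay). *)

theory Defs
  imports Complex_Main "HOL-Library.Product_Lexorder"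
begin

datatype fstate = Wait | Work

record 'v frag =
  nodes :: "'v set"
  cand  :: 'v
  fsize :: nat
  fstate_of   :: fstate

definition fid :: "('v \<Rightarrow> 'i::linorder) \<Rightarrow> 'v frag \<Rightarrow> nat \<times> 'i" where
  "fid ident F = (fsize F, ident (cand F))"

definition adjacent :: "('v \<times> 'v) set \<Rightarrow> 'v frag \<Rightarrow> 'v frag \<Rightarrow> bool" where
  "adjacent E F G \<longleftrightarrow> F \<noteq> G \<and> (\<exists>u\<in>nodes F. \<exists>v\<in>nodes G. (u, v) \<in> E)"

definition neighbours :: "('v \<times> 'v) set \<Rightarrow> 'v frag set \<Rightarrow> 'v frag \<Rightarrow> 'v frag set" where
  "neighbours E S F = {G \<in> S. adjacent E F G}"

text \<open>External edges are directed from the larger-id fragment to the smaller-id one;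
  hence all external edges of F are incoming iff F's id is smaller than that of every neighbour.\<close>
definition all_incoming :: "('v \<times> 'v) set \<Rightarrow> ('v \<Rightarrow> 'i::linorder) \<Rightarrow> 'v frag set \<Rightarrow> 'v frag \<Rightarrow> bool" where
  "all_incoming E ident S F \<longleftrightarrow> (\<forall>G\<in>neighbours E S F. fid ident F < fid ident G)"

definition is_leader :: "('v \<times> 'v) set \<Rightarrow> 'v frag set \<Rightarrow> 'v frag \<Rightarrow> bool" where
  "is_leader E S F \<longleftrightarrow> F \<in> S \<and> neighbours E S F = {}"

definition init_state :: "'v set \<Rightarrow> 'v frag set" where
  "init_state V = (\<lambda>v. \<lparr>nodes = {v}, cand = v, fsize = 1, fstate_of = Wait\<rparr>) ` V"

text \<open>Atomic events. Arbitrary finite delays are modelled by arbitrary interleaving of events.\<close>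
inductive alg_step :: "('v \<times> 'v) set \<Rightarrow> ('v \<Rightarrow> 'i::linorder) \<Rightarrow> real
    \<Rightarrow> 'v frag set \<Rightarrow> 'v frag set \<Rightarrow> bool"
  for E ident X where
  enter_work:
    "\<lbrakk> F \<in> S; fstate_of F = Wait; neighbours E S F \<noteq> {}; all_incoming E ident S F \<rbrakk>
     \<Longrightarrow> alg_step E ident X S (insert (F\<lparr>fstate_of := Work\<rparr>) (S - {F}))"
| grow:
    "\<lbrakk> F \<in> S; fstate_of F = Work; F' \<in> neighbours E S F;
       \<forall>G\<in>neighbours E S F. fid ident G \<le> fid ident F';
       real (card (nodes F)) > X * real (fsize F') \<rbrakk>
     \<Longrightarrow> alg_step E ident X S (insert (F\<lparr>fsize := card (nodes F), fstate_of := Wait\<rparr>) (S - {F}))"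
| join:
    "\<lbrakk> F \<in> S; fstate_of F = Work; F' \<in> neighbours E S F;
       \<forall>G\<in>neighbours E S F. fid ident G \<le> fid ident F';
       \<not> real (card (nodes F)) > X * real (fsize F') \<rbrakk>
     \<Longrightarrow> alg_step E ident X S (insert (F'\<lparr>nodes := nodes F' \<union> nodes F\<rparr>) (S - {F, F'}))"

end

theory Submission
  imports Defs "HOL-Library.Confluence" "HOL-Library.Disjoint_Sets"
begin

(* The algorithm is treated as a rewriting system on sets of fragments. In every reachable
   state the fragments partition V and every working fragment has only incoming external
   edges, so each event is performed by such a locally minimal fragment F and affects only F
   and, for grow and join, its maximal neighbour, which is not locally minimal. Locally
   minimal fragments are pairwise non-adjacent, hence events of two different fragments
   remove disjoint sets of fragments, and each only relabels the other's neighbourhood by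
   fragments of equal id, so they commute; two fragments joining the same neighbour commute
   by associativity of union. Distinct identities make ids distinct, so each fragment has at
   most one enabled event. Thus the steps are strongly confluent on reachable states, and as
   a leader state consists of the leader alone and admits no step, all leader states reached
   from the initial state coincide. *)

lemma adjacent_sym: "sym E \<Longrightarrow> adjacent E F G \<Longrightarrow> adjacent E G F"
  unfolding adjacent_def sym_def by blast

lemma neighbours_replace:
  assumes "R \<subseteq> S" "H \<in> S - R" "H \<noteq> N" "nodes N = \<Union>(nodes ` R)"
  shows "neighbours E (insert N (S - R)) H = (\<lambda>K. if K \<in> R then N else K) ` neighbours E S H"
proof -
  have "adjacent E H N \<longleftrightarrow> (\<exists>K\<in>R. adjacent E H K)"
    using assms(2-4) unfolding adjacent_def by fastforce
  with assms(1,2) show ?thesis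
    unfolding neighbours_def by (auto simp: image_iff)
qed

lemma neighbours_relabel:
  assumes "F \<in> S" "nodes N = nodes F" "\<forall>K\<in>S - {F}. nodes K \<noteq> nodes F"
  shows "neighbours E (insert N (S - {F})) N = neighbours E S F"
  using assms unfolding neighbours_def adjacent_def by auto

lemma disjoint_family_on_replace:
  assumes "disjoint_family_on nodes S" "R \<subseteq> S" "nodes N = \<Union>(nodes ` R)"
  shows "disjoint_family_on nodes (insert N (S - R))"
proof -
  have "nodes N \<inter> nodes K = {}" if "K \<in> S - R" for K
    using assms that unfolding disjoint_family_on_def by fastforce
  then show ?thesis
    using assms(1) unfolding disjoint_family_on_def by (metis Diff_iff Int_commute insert_iff)
qed

lemma all_incoming_view:
  assumes "neighbours E A H = \<phi> ` neighbours E S H"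
    and "\<forall>K\<in>neighbours E S H. fid ident (\<phi> K) = fid ident K"
  shows "all_incoming E ident A H \<longleftrightarrow> all_incoming E ident S H"
  using assms unfolding all_incoming_def by auto

locale leader_election =
  fixes V :: "'v set" and E :: "('v \<times> 'v) set" and ident :: "'v \<Rightarrow> 'i::linorder" and X :: real
  assumes sym_E: "sym E" and inj_on_ident: "inj_on ident V"
begin

abbreviation step :: "'v frag set \<Rightarrow> 'v frag set \<Rightarrow> bool" where
  "step \<equiv> alg_step E ident X"

definition wf_state :: "'v frag set \<Rightarrow> bool" where
  "wf_state S \<longleftrightarrow> (\<forall>F\<in>S. cand F \<in> nodes F) \<and> disjoint_family_on nodes S \<and> \<Union>(nodes ` S) = V
     \<and> (\<forall>F\<in>S. fstate_of F = Work \<longrightarrow> all_incoming E ident S F)"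

lemma wf_state_init_state: "wf_state (init_state V)"
  unfolding wf_state_def init_state_def disjoint_family_on_def all_incoming_def by auto

lemma wf_state_nodes_disjoint:
  "wf_state S \<Longrightarrow> F \<in> S \<Longrightarrow> G \<in> S \<Longrightarrow> F \<noteq> G \<Longrightarrow> nodes F \<inter> nodes G = {}"
  unfolding wf_state_def disjoint_family_on_def by blast

lemma wf_state_cand_notin:
  "wf_state S \<Longrightarrow> F \<in> S \<Longrightarrow> G \<in> S \<Longrightarrow> F \<noteq> G \<Longrightarrow> cand F \<notin> nodes G"
  using wf_state_nodes_disjoint unfolding wf_state_def by blast

lemma inj_on_fid:
  assumes "wf_state S"
  shows "inj_on (fid ident) S"
proof (rule inj_onI)
  fix F G assume FG: "F \<in> S" "G \<in> S" "fid ident F = fid ident G"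
  have "cand F \<in> V" "cand G \<in> V"
    using assms FG(1,2) unfolding wf_state_def by blast+
  with FG(3) have "cand F = cand G"
    using inj_on_ident unfolding fid_def inj_on_def by simp
  then show "F = G"
    using wf_state_cand_notin[OF assms FG(1,2)] assms FG(2) unfolding wf_state_def by auto
qed

lemma all_incoming_not_adjacent:
  assumes "F \<in> S" "G \<in> S" "all_incoming E ident S F" "all_incoming E ident S G"
  shows "\<not> adjacent E F G"
  using assms adjacent_sym[OF sym_E] unfolding all_incoming_def neighbours_def
  by (metis (mono_tags, lifting) mem_Collect_eq order_less_asym)

definition max_neighbour :: "'v frag set \<Rightarrow> 'v frag \<Rightarrow> 'v frag \<Rightarrow> bool" where
  "max_neighbour S F F' \<longleftrightarrow> F' \<in> neighbours E S F \<and> (\<forall>G\<in>neighbours E S F. fid ident G \<le> fid ident F')"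

lemma max_neighbour_unique:
  assumes "wf_state S" "max_neighbour S F F1" "max_neighbour S F F2"
  shows "F1 = F2"
  using assms(2,3) inj_on_fid[OF assms(1)] unfolding max_neighbour_def neighbours_def inj_on_def
  by (metis (no_types, lifting) mem_Collect_eq order_antisym)

lemma max_neighbour_not_incoming:
  assumes "F \<in> S" "all_incoming E ident S F" "max_neighbour S F F'"
  shows "\<not> all_incoming E ident S F'"
  using assms all_incoming_not_adjacent unfolding max_neighbour_def neighbours_def by blast

lemma max_neighbour_view:
  assumes "neighbours E A H = \<phi> ` neighbours E S H"
    and "\<forall>K\<in>neighbours E S H. fid ident (\<phi> K) = fid ident K"
    and "max_neighbour S H H'"
  shows "max_neighbour A H (\<phi> H')" "fsize (\<phi> H') = fsize H'"
  using assms unfolding max_neighbour_def fid_def by auto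

(* F is the acting fragment; the fragments in R are replaced by the new fragment N. *)
inductive event :: "'v frag set \<Rightarrow> 'v frag \<Rightarrow> 'v frag set \<Rightarrow> 'v frag \<Rightarrow> bool" where
  enter_work: "\<lbrakk> F \<in> S; fstate_of F = Wait; neighbours E S F \<noteq> {}; all_incoming E ident S F \<rbrakk>
    \<Longrightarrow> event S F {F} (F\<lparr>fstate_of := Work\<rparr>)"
| grow: "\<lbrakk> F \<in> S; fstate_of F = Work; max_neighbour S F F'; X * real (fsize F') < real (card (nodes F)) \<rbrakk>
    \<Longrightarrow> event S F {F} (F\<lparr>fsize := card (nodes F), fstate_of := Wait\<rparr>)"
| join: "\<lbrakk> F \<in> S; fstate_of F = Work; max_neighbour S F F'; \<not> X * real (fsize F') < real (card (nodes F)) \<rbrakk>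
    \<Longrightarrow> event S F {F, F'} (F'\<lparr>nodes := nodes F' \<union> nodes F\<rparr>)"

lemma step_iff_event: "step S T \<longleftrightarrow> (\<exists>F R N. event S F R N \<and> T = insert N (S - R))"
proof
  assume "step S T"
  then show "\<exists>F R N. event S F R N \<and> T = insert N (S - R)"
    by cases (blast intro: event.intros[unfolded max_neighbour_def])+
next
  assume "\<exists>F R N. event S F R N \<and> T = insert N (S - R)"
  then show "step S T"
    by (auto elim!: event.cases intro: alg_step.intros simp: max_neighbour_def insert_Diff_if)
qed

lemma event_actor:
  assumes "wf_state S" "event S F R N"
  shows "F \<in> S" "all_incoming E ident S F" "neighbours E S F \<noteq> {}"
  using assms by (auto elim!: event.cases simp: wf_state_def max_neighbour_def)

lemma event_removed: "event S F R N \<Longrightarrow> F \<in> R \<and> R \<subseteq> S"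
  by (auto elim: event.cases simp: max_neighbour_def neighbours_def)

lemma event_nodes: "event S F R N \<Longrightarrow> nodes N = \<Union>(nodes ` R)"
  by (auto elim: event.cases)

lemma event_target:
  assumes "event S F R N" "K \<in> R" "K \<noteq> F"
  shows "max_neighbour S F K" "fid ident N = fid ident K"
  using assms by (auto elim!: event.cases simp: fid_def)

lemma event_new_fragment_fresh:
  assumes "wf_state S" "event S F R N" "K \<in> S" "K \<noteq> F"
  shows "N \<noteq> K"
proof -
  have "cand F \<in> nodes N"
    using event_removed[OF assms(2)] event_nodes[OF assms(2)] assms(1) unfolding wf_state_def by blast
  then show ?thesis
    using wf_state_cand_notin[OF assms(1) _ assms(3)] event_actor(1)[OF assms(1,2)] assms(4) by auto
qed

lemma event_view:
  assumes "wf_state S" "event S F R N" "H \<in> S - R" "all_incoming E ident S H"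
  shows "neighbours E (insert N (S - R)) H = (\<lambda>K. if K \<in> R then N else K) ` neighbours E S H"
    and "\<forall>K\<in>neighbours E S H. fid ident (if K \<in> R then N else K) = fid ident K"
proof -
  note actor = event_actor[OF assms(1,2)] and removed = event_removed[OF assms(2)]
  have "H \<noteq> N"
    using event_new_fragment_fresh[OF assms(1,2), of H] assms(3) removed by blast
  then show "neighbours E (insert N (S - R)) H = (\<lambda>K. if K \<in> R then N else K) ` neighbours E S H"
    using neighbours_replace removed assms(3) event_nodes[OF assms(2)] by blast
  have "\<not> adjacent E H F"
    using all_incoming_not_adjacent assms(3,4) actor by blast
  then show "\<forall>K\<in>neighbours E S H. fid ident (if K \<in> R then N else K) = fid ident K"
    using event_target(2)[OF assms(2)] unfolding neighbours_def by auto
qed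

lemma event_new_fragment_all_incoming:
  assumes "wf_state S" "event S F R N" "fstate_of N = Work"
  shows "all_incoming E ident (insert N (S - R)) N"
  using assms(2)
proof cases
  case enter_work
  have "\<forall>K\<in>S - {F}. nodes K \<noteq> nodes F"
    using wf_state_nodes_disjoint[OF assms(1)] assms(1) enter_work(3) unfolding wf_state_def by blast
  then have "neighbours E (insert N (S - R)) N = neighbours E S F"
    using neighbours_relabel[of F S N] enter_work by simp
  then show ?thesis
    using enter_work unfolding all_incoming_def fid_def by simp
next
  case grow
  then show ?thesis using assms(3) by simp
next
  case (join F')
  then have "\<not> all_incoming E ident S F'"
    using max_neighbour_not_incoming event_actor[OF assms(1,2)] by blast
  moreover have "F' \<in> S"
    using join(5) unfolding max_neighbour_def neighbours_def by blast
  ultimately have "fstate_of F' \<noteq> Work"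
    using assms(1) unfolding wf_state_def by blast
  then show ?thesis using assms(3) join(2) by simp
qed

lemma wf_state_event:
  assumes "wf_state S" "event S F R N"
  shows "wf_state (insert N (S - R))" (is "wf_state ?T")
proof -
  note removed = event_removed[OF assms(2)] and nodes_N = event_nodes[OF assms(2)]
  have "cand N \<in> nodes N"
    using assms(2) by cases (use assms(1) in \<open>auto simp: wf_state_def max_neighbour_def neighbours_def\<close>)
  then have cands: "\<forall>K\<in>?T. cand K \<in> nodes K"
    using assms(1) unfolding wf_state_def by blast
  have "disjoint_family_on nodes ?T"
    using disjoint_family_on_replace assms(1) removed nodes_N unfolding wf_state_def by blast
  moreover have "\<Union>(nodes ` ?T) = \<Union>(nodes ` S)"
    using removed nodes_N by auto
  moreover have "all_incoming E ident ?T K" if "K \<in> ?T" "fstate_of K = Work" for K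
  proof (cases "K = N")
    case True
    then show ?thesis
      using event_new_fragment_all_incoming[OF assms] that(2) by simp
  next
    case False
    then have "K \<in> S - R" "all_incoming E ident S K"
      using that assms(1) unfolding wf_state_def by auto
    then show ?thesis
      using all_incoming_view[OF event_view[OF assms(1,2)]] by blast
  qed
  ultimately show ?thesis
    using cands assms(1) unfolding wf_state_def by simp
qed

lemma wf_state_step: "wf_state S \<Longrightarrow> step S T \<Longrightarrow> wf_state T"
  by (auto simp: step_iff_event intro: wf_state_event)

lemma wf_state_steps: "step\<^sup>*\<^sup>* S T \<Longrightarrow> wf_state S \<Longrightarrow> wf_state T"
  by (induction rule: rtranclp_induct) (auto intro: wf_state_step)

lemma event_deterministic:
  assumes "wf_state S" "event S F R N" "event S F R' N'"
  shows "R' = R \<and> N' = N"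
  using assms(2,3) by (auto elim!: event.cases dest: max_neighbour_unique[OF assms(1)])

lemma event_actor_not_removed:
  assumes "wf_state S" "event S F R N" "event S G R' N'" "F \<noteq> G"
  shows "G \<notin> R"
  using event_target(1)[OF assms(2)] max_neighbour_not_incoming event_actor[OF assms(1,2)]
    event_actor[OF assms(1,3)] assms(4) by blast

lemma event_new_fragment_not_removed:
  assumes "wf_state S" "event S F R N" "event S G R' N'" "F \<noteq> G"
  shows "N \<notin> R'"
  using event_new_fragment_fresh[OF assms(1,2)] event_actor_not_removed[OF assms(1,3,2)]
    event_removed[OF assms(3)] assms(4) by blast

lemma event_transfer:
  assumes "G \<in> A" "neighbours E A G = \<phi> ` neighbours E S G"
    and "\<forall>K\<in>neighbours E S G. fid ident (\<phi> K) = fid ident K"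
    and "event S G R N" "\<forall>K\<in>R - {G}. \<phi> K = K"
  shows "event A G R N"
  using assms(4)
proof cases
  case enter_work
  then show ?thesis
    using event.enter_work[of G A] assms(1,2) all_incoming_view[OF assms(2,3)] by auto
next
  case (grow G')
  then show ?thesis
    using event.grow[of G A "\<phi> G'"] assms(1) max_neighbour_view[OF assms(2,3)] by auto
next
  case (join G')
  have "G' \<noteq> G"
    using join(5) unfolding max_neighbour_def neighbours_def adjacent_def by blast
  then have "\<phi> G' = G'"
    using join(1) assms(5) by blast
  then have "max_neighbour A G G'"
    using max_neighbour_view(1)[OF assms(2,3) join(5)] by simp
  with join show ?thesis
    using event.join[of G A G'] assms(1) by simp
qed

lemma join_transfer:
  assumes "G \<in> A" "neighbours E A G = \<phi> ` neighbours E S G"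
    and "\<forall>K\<in>neighbours E S G. fid ident (\<phi> K) = fid ident K"
    and "event S G {G, G'} (G'\<lparr>nodes := nodes G' \<union> nodes G\<rparr>)" "G' \<noteq> G"
  shows "event A G {G, \<phi> G'} ((\<phi> G')\<lparr>nodes := nodes (\<phi> G') \<union> nodes G\<rparr>)"
  using assms(4)
proof cases
  case (join G'')
  then have "G'' = G'"
    using assms(5) by (metis doubleton_eq_iff)
  with join show ?thesis
    using event.join[of G A "\<phi> G'"] assms(1) max_neighbour_view[OF assms(2,3)] by auto
qed (use assms(5) in auto)

lemma event_persists:
  assumes "wf_state S" "event S F RF NF" "event S G RG NG" "F \<noteq> G" "RF \<inter> RG = {}"
  shows "event (insert NF (S - RF)) G RG NG"
proof -
  have G: "G \<in> S - RF" "all_incoming E ident S G"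
    using event_actor[OF assms(1,3)] event_actor_not_removed[OF assms(1-4)] by blast+
  show ?thesis
  proof (rule event_transfer[OF _ event_view[OF assms(1,2) G] assms(3)])
    show "G \<in> insert NF (S - RF)"
      using G by blast
    show "\<forall>K\<in>RG - {G}. (if K \<in> RF then NF else K) = K"
      using assms(5) by auto
  qed
qed

lemma join_after_join:
  assumes "wf_state S" "event S F {F, F'} (F'\<lparr>nodes := nodes F' \<union> nodes F\<rparr>)"
    and "event S G {G, F'} (F'\<lparr>nodes := nodes F' \<union> nodes G\<rparr>)" "F \<noteq> G"
  shows "step (insert (F'\<lparr>nodes := nodes F' \<union> nodes F\<rparr>) (S - {F, F'}))
    (insert (F'\<lparr>nodes := nodes F' \<union> nodes F \<union> nodes G\<rparr>) (S - {F, F', G}))"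
proof -
  define NF where "NF = F'\<lparr>nodes := nodes F' \<union> nodes F\<rparr>"
  let ?A = "insert NF (S - {F, F'})"
  have G: "G \<in> S - {F, F'}" "all_incoming E ident S G"
    using event_actor[OF assms(1,3)] event_actor_not_removed[OF assms(1-4)] by blast+
  have "event ?A G {G, NF} (NF\<lparr>nodes := nodes NF \<union> nodes G\<rparr>)"
    using join_transfer[OF _ event_view[OF assms(1,2) G, folded NF_def] assms(3)] G by auto
  moreover have "NF \<notin> S - {F, F'}"
    using event_new_fragment_fresh[OF assms(1,2)] unfolding NF_def by blast
  then have "?A - {G, NF} = S - {F, F', G}"
    by blast
  ultimately show ?thesis
    unfolding step_iff_event NF_def by fastforce
qed

lemma events_overlapE:
  assumes "wf_state S" "event S F RF NF" "event S G RG NG" "F \<noteq> G" "RF \<inter> RG \<noteq> {}"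
  obtains F' where "RF = {F, F'}" "NF = F'\<lparr>nodes := nodes F' \<union> nodes F\<rparr>"
    and "RG = {G, F'}" "NG = F'\<lparr>nodes := nodes F' \<union> nodes G\<rparr>"
proof -
  have "F \<notin> RG" "G \<notin> RF"
    using event_actor_not_removed assms(1-4) by blast+
  from assms(2) show thesis
  proof cases
    case (join F')
    from assms(3) show thesis
    proof cases
      case (join G')
      with \<open>RF = {F, F'}\<close> have "F' = G'"
        using assms(5) \<open>F \<notin> RG\<close> \<open>G \<notin> RF\<close> by blast
      with join \<open>RF = {F, F'}\<close> \<open>NF = F'\<lparr>nodes := nodes F' \<union> nodes F\<rparr>\<close> show thesis
        using that by blast
    qed (use assms(5) \<open>G \<notin> RF\<close> in blast)+
  qed (use assms(5) \<open>F \<notin> RG\<close> in blast)+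
qed

lemma step_diamond:
  assumes "wf_state S" "step S A" "step S B"
  shows "A = B \<or> (\<exists>C. step A C \<and> step B C)"
proof -
  obtain F RF NF where F: "event S F RF NF" "A = insert NF (S - RF)"
    using assms(2) unfolding step_iff_event by blast
  obtain G RG NG where G: "event S G RG NG" "B = insert NG (S - RG)"
    using assms(3) unfolding step_iff_event by blast
  consider "F = G" | "F \<noteq> G" "RF \<inter> RG = {}" | "F \<noteq> G" "RF \<inter> RG \<noteq> {}"
    by blast
  then show ?thesis
  proof cases
    case 1
    then show ?thesis
      using event_deterministic[OF assms(1) F(1)] F(2) G by simp
  next
    case 2
    have "event A G RG NG"
      using event_persists[OF assms(1) F(1) G(1) 2] F(2) by simp
    moreover have "event B F RF NF"
      using event_persists[OF assms(1) G(1) F(1)] 2 G(2) by blast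
    moreover have "NF \<notin> RG" "NG \<notin> RF"
      using event_new_fragment_not_removed assms(1) F(1) G(1) 2(1) by blast+
    then have "insert NG (A - RG) = insert NF (B - RF)"
      using F(2) G(2) by blast
    ultimately show ?thesis
      unfolding step_iff_event by metis
  next
    case 3
    then obtain F' where RF: "RF = {F, F'}" "NF = F'\<lparr>nodes := nodes F' \<union> nodes F\<rparr>"
      and RG: "RG = {G, F'}" "NG = F'\<lparr>nodes := nodes F' \<union> nodes G\<rparr>"
      using events_overlapE[OF assms(1) F(1) G(1)] by blast
    have "step A (insert (F'\<lparr>nodes := nodes F' \<union> nodes F \<union> nodes G\<rparr>) (S - {F, F', G}))"
      using join_after_join[OF assms(1), of F F' G] F G RF RG 3(1) by simp
    moreover have "step B (insert (F'\<lparr>nodes := nodes F' \<union> nodes G \<union> nodes F\<rparr>) (S - {G, F', F}))"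
      using join_after_join[OF assms(1), of G F' F] F G RF RG 3(1) by simp
    moreover have "insert (F'\<lparr>nodes := nodes F' \<union> nodes G \<union> nodes F\<rparr>) (S - {G, F', F})
        = insert (F'\<lparr>nodes := nodes F' \<union> nodes F \<union> nodes G\<rparr>) (S - {F, F', G})"
      by (simp add: Un_ac insert_commute)
    ultimately show ?thesis
      by auto
  qed
qed

lemma strong_confluentp_step: "strong_confluentp (\<lambda>S T. wf_state S \<and> step S T)"
proof
  fix S A B
  assume A: "wf_state S \<and> step S A" and B: "wf_state S \<and> step S B"
  then have wf_AB: "wf_state A" "wf_state B"
    using wf_state_step by blast+
  from step_diamond A B consider "A = B" | C where "step A C" "step B C"
    by blast
  then show "\<exists>C. (\<lambda>S T. wf_state S \<and> step S T)\<^sup>*\<^sup>* A C \<and> (\<lambda>S T. wf_state S \<and> step S T)\<^sup>=\<^sup>= B C"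
  proof cases
    case 1
    then show ?thesis by blast
  next
    case 2
    then show ?thesis using wf_AB by blast
  qed
qed

lemma steps_confluent:
  assumes "wf_state S" "step\<^sup>*\<^sup>* S A" "step\<^sup>*\<^sup>* S B"
  obtains C where "step\<^sup>*\<^sup>* A C" "step\<^sup>*\<^sup>* B C"
proof -
  let ?r = "\<lambda>S T. wf_state S \<and> step S T"
  have wf_steps: "?r\<^sup>*\<^sup>* S T" if "step\<^sup>*\<^sup>* S T" for T
    using that
  proof (induction rule: rtranclp_induct)
    case (step T U)
    then show ?case
      using wf_state_steps assms(1) by (simp add: rtranclp.rtrancl_into_rtrancl)
  qed simp
  obtain C where "?r\<^sup>*\<^sup>* A C" "?r\<^sup>*\<^sup>* B C"
    using confluentpD[OF strong_confluentp_imp_confluentp[OF strong_confluentp_step]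
        wf_steps[OF assms(2)] wf_steps[OF assms(3)]] by blast
  then show thesis
    using that mono_rtranclp[of ?r step] by blast
qed

lemma leader_only_fragment:
  assumes "wf_state S" "E \<subseteq> V \<times> V" "\<forall>u\<in>V. \<forall>v\<in>V. (u, v) \<in> E\<^sup>*" "is_leader E S L"
  shows "S = {L}"
proof -
  have L: "L \<in> S" "neighbours E S L = {}"
    using assms(4) unfolding is_leader_def by auto
  have "E `` nodes L \<subseteq> nodes L"
  proof
    fix v assume "v \<in> E `` nodes L"
    then obtain u where "u \<in> nodes L" "(u, v) \<in> E"
      by blast
    moreover obtain M where "M \<in> S" "v \<in> nodes M"
      using \<open>(u, v) \<in> E\<close> assms(1,2) unfolding wf_state_def by blast
    ultimately show "v \<in> nodes L"
      using L unfolding neighbours_def adjacent_def by blast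
  qed
  then have "E\<^sup>* `` nodes L = nodes L"
    by (rule Image_closed_trancl)
  moreover have "cand L \<in> nodes L" "nodes L \<subseteq> V"
    using assms(1) L(1) unfolding wf_state_def by blast+
  ultimately have V: "V \<subseteq> nodes L"
    using assms(3) by blast
  have "K = L" if "K \<in> S" for K
  proof (rule ccontr)
    assume "K \<noteq> L"
    moreover have "cand K \<in> V"
      using assms(1) that unfolding wf_state_def by blast
    ultimately show False
      using wf_state_cand_notin[OF assms(1) that L(1)] V by blast
  qed
  then show ?thesis
    using L(1) by blast
qed

lemma steps_from_leader_state:
  assumes "wf_state S" "S = {L}" "is_leader E S L" "step\<^sup>*\<^sup>* S T"
  shows "T = S"
proof -
  have terminal: "\<not> step S U" for U
  proof
    assume "step S U"
    then obtain F R N where "event S F R N"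
      unfolding step_iff_event by blast
    with assms(1-3) show False
      using event_actor unfolding is_leader_def by blast
  qed
  from assms(4) show ?thesis
    by (rule converse_rtranclpE) (use terminal in auto)
qed

end

theorem corollary1:
  fixes V :: "'v set" and E :: "('v \<times> 'v) set" and ident :: "'v \<Rightarrow> 'i::linorder" and X :: real
  assumes "finite V"
    and "E \<subseteq> V \<times> V"
    and "sym E"
    and "\<forall>u\<in>V. \<forall>v\<in>V. (u, v) \<in> E\<^sup>*"
    and "X > 1"
    and "inj_on ident V"
    and "(alg_step E ident X)\<^sup>*\<^sup>* (init_state V) S1" and "is_leader E S1 L1"
    and "(alg_step E ident X)\<^sup>*\<^sup>* (init_state V) S2" and "is_leader E S2 L2"
  shows "ident (cand L1) = ident (cand L2)"
proof -
  interpret leader_election V E ident X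
    using assms(3,6) by unfold_locales
  have wf_S: "wf_state S1" "wf_state S2"
    using wf_state_steps wf_state_init_state assms(7,9) by blast+
  have S1: "S1 = {L1}" and S2: "S2 = {L2}"
    using leader_only_fragment wf_S assms(2,4,8,10) by blast+
  obtain C where "(alg_step E ident X)\<^sup>*\<^sup>* S1 C" "(alg_step E ident X)\<^sup>*\<^sup>* S2 C"
    using steps_confluent[OF wf_state_init_state assms(7,9)] by blast
  then have "S1 = S2"
    using steps_from_leader_state wf_S S1 S2 assms(8,10) by metis
  then show ?thesis
    using S1 S2 by simp
qed

end
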